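(* Let $\mathcal G$ be the $\mathbb Z$-periodic graph obtained from the one-dimensional lattice $\mathbb Z$ by attaching a pendant edge at each vertex, and let $H=A+Q$ with a $\mathbb Z$-periodic potential $Q$. Its fundamental graph has two vertices $v_1$ (degree 3) and $v_2$ (degree 1); write $q_s=Q(v_s)$. Then (a) $\mathcal I_1^0(Q)=q_1+q_2$, $\mathcal I_2^0(Q)=\frac12(q_1^2+q_2^2)$, $\mathcal I_2^{1}(Q)=\mathcal I_2^{-1}(Q)=q_1$ form a complete system of Floquet spectral invariants of $H$; (b) $\mathcal I_1(Q)=q_1+q_2$, $\mathcal I_2(Q)=\frac12(q_1^2+q_2^2)+2q_1$ form a complete system of periodic spectral invariants of $H$; (c) if a (complex-valued) potential $P$ has the same periodic spectrum as $Q$ (i.e. $\sigma(A(0)+P)=\sigma(A(0)+Q)$), then $P=(q_1,q_2)$ or $P=(q_2-2,q_1+2)$; in particular if $Q=0$ then $P=0$ or $P=(-2,2)$, and if $Q=-\varkappa=(-3,-1)$ then $P=-\varkappa$.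
   Context: The fundamental graph $\mathcal G_*$ consists of vertices $v_1,v_2$, a loop $\mathbf e_1$ at $v_1$ with edge index $1$, and an edge $\mathbf e_2$ between $v_1$ and $v_2$ with index $0$ (each taken with both orientations; inverse edge has negated index). Floquet operators: $H(k)=A(k)+Q$ on $\mathbb C^2$, $(A(k)f)(v)=\sum_{\mathbf e=(v,u)}e^{ik\tau(\mathbf e)}f(u)$, $k\in\mathbb R/2\pi\mathbb Z$; Floquet spectrum $\{\sigma(H(k))\}_k$, periodic spectrum $\sigma(H(0))$. A functional is a Floquet (periodic) spectral invariant if it takes equal values on potentials with equal Floquet (periodic) spectra; a family is complete if its equality is equivalent to equality of the spectra. Cycles: closed paths of oriented edges up to cyclic permutation; prime if not an $r$-fold repetition with $r\ge2$; length $|\mathbf c|$, index $\tau(\mathbf c)$ = sum of edge indices. Modified graph $\widetilde{\mathcal G}_*$: add a loop $\mathbf e_v$ of index $0$ at each vertex; weight $\omega(\mathbf c,Q)$ = product of $Q(v)$ over added loops $\mathbf e_v$ traversed (other edges weight 1). $\mathcal P,\widetilde{\mathcal P}$: prime cycles in $\mathcal G_*,\widetilde{\mathcal G}_*$. $\mathcal I_n^{\mathrm m}(Q)=\sum\frac1r\omega^r(\mathbf c,Q)$ over $r\in\{1,\dots,n\}$, $\mathbf c\in\widetilde{\mathcal P}\setminus\mathcal P$, $r|\mathbf c|=n$, $r\tau(\mathbf c)=\mathrm m$; $\mathcal I_n(Q)$ the same without index condition. *)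

theory Defs
  imports Complex_Main
begin

datatype vert = V1 | V2

text \<open>Oriented edges of the modified fundamental graph:
  L1 / L1i : the loop e1 at v1 (index 1) and its inverse (index -1);
  E2 / E2i : the edge e2 from v1 to v2 (index 0) and its inverse;
  Lv1 / Lv2 : the added loops e_v at v1, v2 (index 0), taken once each.\<close>
datatype oedge = L1 | L1i | E2 | E2i | Lv1 | Lv2

fun src :: "oedge \<Rightarrow> vert" where
  "src L1 = V1" | "src L1i = V1" | "src E2 = V1" | "src E2i = V2"
| "src Lv1 = V1" | "src Lv2 = V2"

fun tgt :: "oedge \<Rightarrow> vert" where
  "tgt L1 = V1" | "tgt L1i = V1" | "tgt E2 = V2" | "tgt E2i = V1"
| "tgt Lv1 = V1" | "tgt Lv2 = V2"

fun tau :: "oedge \<Rightarrow> int" where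
  "tau L1 = 1" | "tau L1i = -1" | "tau E2 = 0" | "tau E2i = 0"
| "tau Lv1 = 0" | "tau Lv2 = 0"

definition orig_edges :: "oedge set" where
  "orig_edges = {L1, L1i, E2, E2i}"

fun wt :: "(vert \<Rightarrow> complex) \<Rightarrow> oedge \<Rightarrow> complex" where
  "wt Q Lv1 = Q V1" | "wt Q Lv2 = Q V2" | "wt Q _ = 1"

definition Aop :: "real \<Rightarrow> (vert \<Rightarrow> complex) \<Rightarrow> vert \<Rightarrow> complex" where
  "Aop k f v = (\<Sum>e\<in>{e\<in>orig_edges. src e = v}. exp (\<i> * of_real k * of_int (tau e)) * f (tgt e))"

definition Hop :: "real \<Rightarrow> (vert \<Rightarrow> complex) \<Rightarrow> (vert \<Rightarrow> complex) \<Rightarrow> vert \<Rightarrow> complex" where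
  "Hop k Q f v = Aop k f v + Q v * f v"

definition spec :: "real \<Rightarrow> (vert \<Rightarrow> complex) \<Rightarrow> complex set" where
  "spec k Q = {z. \<exists>f. f \<noteq> (\<lambda>_. 0) \<and> Hop k Q f = (\<lambda>v. z * f v)}"

definition closed_path :: "oedge list \<Rightarrow> bool" where
  "closed_path xs \<longleftrightarrow> xs \<noteq> [] \<and>
     (\<forall>i < length xs. tgt (xs ! i) = src (xs ! ((i + 1) mod length xs)))"

text \<open>A cycle is a closed path up to cyclic permutation: the set of its rotations.\<close>
definition cyc :: "oedge list \<Rightarrow> oedge list set" where
  "cyc xs = {rotate i xs | i. True}"

definition cycles :: "oedge list set set" where
  "cycles = {cyc xs | xs. closed_path xs}"

definition rep :: "oedge list set \<Rightarrow> oedge list" where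
  "rep c = (SOME xs. xs \<in> c)"

definition clen :: "oedge list set \<Rightarrow> nat" where
  "clen c = length (rep c)"

definition cidx :: "oedge list set \<Rightarrow> int" where
  "cidx c = sum_list (map tau (rep c))"

definition omega :: "oedge list set \<Rightarrow> (vert \<Rightarrow> complex) \<Rightarrow> complex" where
  "omega c Q = prod_list (map (wt Q) (rep c))"

definition prime_list :: "oedge list \<Rightarrow> bool" where
  "prime_list xs \<longleftrightarrow> \<not> (\<exists>p r. r \<ge> 2 \<and> xs = concat (replicate r p))"

definition Pmod :: "oedge list set set" where
  "Pmod = {c \<in> cycles. prime_list (rep c)}"

definition Porig :: "oedge list set set" where
  "Porig = {c \<in> Pmod. set (rep c) \<subseteq> orig_edges}"

definition Inm :: "nat \<Rightarrow> int \<Rightarrow> (vert \<Rightarrow> complex) \<Rightarrow> complex" where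
  "Inm n m Q = (\<Sum>(r, c) \<in> {(r, c). r \<in> {1..n} \<and> c \<in> Pmod - Porig \<and>
                                  r * clen c = n \<and> int r * cidx c = m}.
                  omega c Q ^ r / of_nat r)"

definition In :: "nat \<Rightarrow> (vert \<Rightarrow> complex) \<Rightarrow> complex" where
  "In n Q = (\<Sum>(r, c) \<in> {(r, c). r \<in> {1..n} \<and> c \<in> Pmod - Porig \<and> r * clen c = n}.
                  omega c Q ^ r / of_nat r)"

definition pot :: "complex \<Rightarrow> complex \<Rightarrow> vert \<Rightarrow> complex" where
  "pot a b v = (case v of V1 \<Rightarrow> a | V2 \<Rightarrow> b)"

end

theory Submission
  imports Defs
begin

text \<open>At quasimomentum k the Floquet operator is the 2x2 matrix [[2 cos k + q1, 1], [1, q2]]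
  (the loop e1 contributes e^ik + e^-ik), so its spectrum is the root set of
  z^2 - (2 cos k + q1 + q2) z + (2 cos k + q1) q2 - 1, and two such spectra agree iff
  q1 + q2 and (2 cos k + q1) q2 agree. Comparing k = 0 with k = pi recovers q2 and hence Q;
  at k = 0 alone, once the sum is fixed, the product condition is a quadratic equation for q1
  whose roots are q1 and q2 - 2. On the cycle side, the prime cycles of length at most 2 that
  use an added loop are e_v1, e_v2, e_v1 e1 and e_v1 e1^-1, with weights q1, q2, q1, q1 and
  indices 0, 0, 1, -1; they produce the stated values of the invariants.\<close>

lemma vert_fun_eq_iff: "f = g \<longleftrightarrow> f V1 = g V1 \<and> f V2 = g V2"
  by (metis (full_types) ext vert.exhaust)

lemma pot_eta: "pot (f V1) (f V2) = f"
  by (simp add: vert_fun_eq_iff pot_def)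

lemma pot_eq_iff: "P = pot a b \<longleftrightarrow> P V1 = a \<and> P V2 = b"
  by (simp add: vert_fun_eq_iff pot_def)

lemma eigenvalue_2x2_iff:
  fixes a b c d z :: "'a::field"
  shows "(\<exists>x y. (x \<noteq> 0 \<or> y \<noteq> 0) \<and> a * x + b * y = z * x \<and> c * x + d * y = z * y)
         \<longleftrightarrow> (a - z) * (d - z) - b * c = 0"
proof
  assume "\<exists>x y. (x \<noteq> 0 \<or> y \<noteq> 0) \<and> a * x + b * y = z * x \<and> c * x + d * y = z * y"
  then obtain x y where nz: "x \<noteq> 0 \<or> y \<noteq> 0"
    and r1: "a * x + b * y = z * x" and r2: "c * x + d * y = z * y"
    by blast
  have "((a - z) * (d - z) - b * c) * x
          = (d - z) * (a * x + b * y - z * x) - b * (c * x + d * y - z * y)"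
    and "((a - z) * (d - z) - b * c) * y
          = (a - z) * (c * x + d * y - z * y) - c * (a * x + b * y - z * x)"
    by (simp_all add: algebra_simps)
  with nz r1 r2 show "(a - z) * (d - z) - b * c = 0"
    by auto
next
  assume det: "(a - z) * (d - z) - b * c = 0"
  show "\<exists>x y. (x \<noteq> 0 \<or> y \<noteq> 0) \<and> a * x + b * y = z * x \<and> c * x + d * y = z * y"
  proof (cases "a = z \<and> b = 0")
    case first_row_zero: True
    show ?thesis
    proof (cases "c = 0 \<and> d = z")
      case True
      with first_row_zero show ?thesis
        by (intro exI[of _ 1] exI[of _ 0]) simp
    next
      case False
      with first_row_zero show ?thesis
        by (intro exI[of _ "d - z"] exI[of _ "- c"]) (auto simp: algebra_simps)
    qed
  next
    case False
    with det show ?thesis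
      by (intro exI[of _ b] exI[of _ "z - a"]) (auto simp: algebra_simps)
  qed
qed

lemma monic_quadratic_has_root: "\<exists>r::complex. r^2 - s * r + d = 0"
proof -
  define r where "r = (s + csqrt (s^2 - 4 * d)) / 2"
  have "r^2 - s * r + d = ((csqrt (s^2 - 4 * d))^2 - (s^2 - 4 * d)) / 4"
    unfolding r_def by (simp add: power2_eq_square field_simps)
  then show ?thesis by (auto simp: power2_csqrt)
qed

lemma monic_quadratic_roots_eq_iff:
  fixes s d s' d' :: complex
  shows "{z. z^2 - s * z + d = 0} = {z. z^2 - s' * z + d' = 0} \<longleftrightarrow> s = s' \<and> d = d'"
proof
  assume roots: "{z. z^2 - s * z + d = 0} = {z. z^2 - s' * z + d' = 0}"
  obtain r where r: "r^2 - s * r + d = 0"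
    using monic_quadratic_has_root by blast
  have r': "r^2 - s' * r + d' = 0"
    using r roots by blast
  have factor: "z^2 - s * z + d = (z - r) * (z - (s - r))"
    and factor': "z^2 - s' * z + d' = (z - r) * (z - (s' - r))" for z
    using r r' by (simp_all add: power2_eq_square algebra_simps)
  have "s' - r \<in> {z. z^2 - s * z + d = 0}"
    unfolding roots by (simp add: factor')
  then have "s' = 2 * r \<or> s' = s"
    by (simp add: factor)
  moreover have "s - r \<in> {z. z^2 - s' * z + d' = 0}"
    unfolding roots[symmetric] by (simp add: factor)
  then have "s = 2 * r \<or> s = s'"
    by (simp add: factor')
  ultimately have "s = s'"
    by auto
  moreover have "d = r * (s - r)" and "d' = r * (s' - r)"
    using r r' by (simp_all add: power2_eq_square algebra_simps)
  ultimately show "s = s' \<and> d = d'"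
    by simp
qed simp

lemma exp_add_exp_neg: "exp (\<i> * of_real k) + exp (- (\<i> * of_real k)) = of_real (2 * cos k)"
proof -
  have "exp (\<i> * of_real k) + exp (- (\<i> * of_real k)) = cis k + cis (- k)"
    by (simp add: cis_conv_exp)
  also have "\<dots> = of_real (2 * cos k)"
    by (simp add: complex_eq_iff)
  finally show ?thesis .
qed

lemma Aop_V1: "Aop k f V1 = of_real (2 * cos k) * f V1 + f V2"
proof -
  have "{e \<in> orig_edges. src e = V1} = {L1, L1i, E2}"
    by (auto simp: orig_edges_def)
  then show ?thesis
    using exp_add_exp_neg[of k] by (simp add: Aop_def algebra_simps flip: distrib_left)
qed

lemma Aop_V2: "Aop k f V2 = f V1"
proof -
  have "{e \<in> orig_edges. src e = V2} = {E2i}"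
    by (auto simp: orig_edges_def)
  then show ?thesis
    by (simp add: Aop_def)
qed

text \<open>The coefficients 1 are kept so that eigenvalue_2x2_iff applies literally.\<close>

lemma Hop_pot_V1: "Hop k Q (pot x y) V1 = (of_real (2 * cos k) + Q V1) * x + 1 * y"
  by (simp add: Hop_def Aop_V1 pot_def algebra_simps)

lemma Hop_pot_V2: "Hop k Q (pot x y) V2 = 1 * x + Q V2 * y"
  by (simp add: Hop_def Aop_V2 pot_def algebra_simps)

lemma spec_eq_roots:
  "spec k Q = {z. z^2 - (of_real (2 * cos k) + Q V1 + Q V2) * z
                  + ((of_real (2 * cos k) + Q V1) * Q V2 - 1) = 0}"
proof -
  let ?a = "of_real (2 * cos k) + Q V1"
  have eigenvector: "Hop k Q (pot x y) = (\<lambda>v. z * pot x y v) \<longleftrightarrow>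
                       ?a * x + 1 * y = z * x \<and> 1 * x + Q V2 * y = z * y" for x y z
    by (simp only: vert_fun_eq_iff Hop_pot_V1 Hop_pot_V2) (simp add: pot_def)
  have nonzero: "pot x y \<noteq> (\<lambda>_. 0) \<longleftrightarrow> x \<noteq> 0 \<or> y \<noteq> 0" for x y :: complex
    by (simp add: vert_fun_eq_iff pot_def)
  have "z \<in> spec k Q \<longleftrightarrow>
          (\<exists>x y. (x \<noteq> 0 \<or> y \<noteq> 0) \<and> ?a * x + 1 * y = z * x \<and> 1 * x + Q V2 * y = z * y)" for z
    unfolding spec_def mem_Collect_eq
    by (metis (no_types, lifting) eigenvector nonzero pot_eta)
  then have "z \<in> spec k Q \<longleftrightarrow> (?a - z) * (Q V2 - z) - 1 * 1 = 0" for z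
    by (simp only: eigenvalue_2x2_iff)
  moreover have "(?a - z) * (Q V2 - z) - 1 * 1 = z^2 - (?a + Q V2) * z + (?a * Q V2 - 1)" for z
    by (simp add: power2_eq_square algebra_simps)
  ultimately show ?thesis
    by (intro set_eqI) (simp only: mem_Collect_eq)
qed

lemma spec_eq_iff:
  "spec k P = spec k Q \<longleftrightarrow>
     P V1 + P V2 = Q V1 + Q V2
     \<and> (of_real (2 * cos k) + P V1) * P V2 = (of_real (2 * cos k) + Q V1) * Q V2"
  unfolding spec_eq_roots monic_quadratic_roots_eq_iff by (simp add: add.assoc)

lemma Floquet_spec_eq_iff: "(\<forall>k. spec k P = spec k Q) \<longleftrightarrow> P = Q"
proof
  assume "\<forall>k. spec k P = spec k Q"
  from this[rule_format, of 0] this[rule_format, of pi]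
  have sum: "P V1 + P V2 = Q V1 + Q V2"
    and at_0: "(2 + P V1) * P V2 = (2 + Q V1) * Q V2"
    and at_pi: "(-2 + P V1) * P V2 = (-2 + Q V1) * Q V2"
    by (simp_all add: spec_eq_iff)
  have "4 * P V2 = (2 + P V1) * P V2 - (-2 + P V1) * P V2"
    by (simp add: algebra_simps)
  also have "\<dots> = (2 + Q V1) * Q V2 - (-2 + Q V1) * Q V2"
    by (simp only: at_0 at_pi)
  also have "\<dots> = 4 * Q V2"
    by (simp add: algebra_simps)
  finally show "P = Q"
    using sum by (simp add: vert_fun_eq_iff)
qed simp

lemma sum_product_eq_iff:
  fixes p1 p2 q1 q2 :: complex
  shows "p1 + p2 = q1 + q2 \<and> (2 + p1) * p2 = (2 + q1) * q2 \<longleftrightarrow>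
           p2 = q1 + q2 - p1 \<and> (p1 - q1) * (p1 - (q2 - 2)) = 0"
proof -
  have "(2 + p1) * (q1 + q2 - p1) - (2 + q1) * q2 = - ((p1 - q1) * (p1 - (q2 - 2)))"
    by (simp add: algebra_simps)
  then have "(2 + p1) * (q1 + q2 - p1) = (2 + q1) * q2 \<longleftrightarrow> (p1 - q1) * (p1 - (q2 - 2)) = 0"
    by (metis eq_iff_diff_eq_0 neg_equal_0_iff_equal)
  moreover have "p1 + p2 = q1 + q2 \<longleftrightarrow> p2 = q1 + q2 - p1"
    by (metis add_diff_cancel_left' add_diff_eq diff_add_cancel add.commute)
  ultimately show ?thesis
    by metis
qed

lemma spec_0_eq_iff:
  "spec 0 P = spec 0 Q \<longleftrightarrow> P V1 + P V2 = Q V1 + Q V2 \<and> (2 + P V1) * P V2 = (2 + Q V1) * Q V2"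
  by (simp add: spec_eq_iff)

lemma periodic_spec_eq_iff:
  "spec 0 P = spec 0 Q \<longleftrightarrow> P = Q \<or> P = pot (Q V2 - 2) (Q V1 + 2)"
proof -
  have "spec 0 P = spec 0 Q \<longleftrightarrow> P V2 = Q V1 + Q V2 - P V1 \<and> (P V1 = Q V1 \<or> P V1 = Q V2 - 2)"
    by (simp only: spec_0_eq_iff sum_product_eq_iff mult_eq_0_iff right_minus_eq)
  then show ?thesis
    unfolding vert_fun_eq_iff[of P] pot_eq_iff by (cases "P V1 = Q V1") auto
qed

lemma cyc_eq_rotations: "xs \<noteq> [] \<Longrightarrow> cyc xs = (\<lambda>i. rotate i xs) ` {..<length xs}"
  unfolding cyc_def by (auto simp: image_iff intro!: bexI[of _ "_ mod length xs"] rotate_conv_mod)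

lemma cyc_singleton: "cyc [a] = {[a]}"
  by (simp add: cyc_eq_rotations lessThan_Suc)

lemma cyc_pair: "cyc [a, b] = {[a, b], [b, a]}"
  by (simp add: cyc_eq_rotations lessThan_Suc numeral_2_eq_2 insert_commute)

lemma rep_cyc: "rep (cyc xs) \<in> cyc xs"
  unfolding rep_def by (rule someI[of _ xs]) (auto simp: cyc_def intro: exI[of _ 0])

lemma rep_cyc_singleton: "rep (cyc [a]) = [a]"
  using rep_cyc[of "[a]"] by (simp add: cyc_singleton)

lemma rep_cyc_pair: "rep (cyc [a, b]) = [a, b] \<or> rep (cyc [a, b]) = [b, a]"
  using rep_cyc[of "[a, b]"] by (simp add: cyc_pair)

lemma clen_cyc: "clen (cyc xs) = length xs"
  using rep_cyc[of xs] by (auto simp: clen_def cyc_def)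

lemma cidx_cyc_singleton: "cidx (cyc [a]) = tau a"
  by (simp add: cidx_def rep_cyc_singleton)

lemma cidx_cyc_pair: "cidx (cyc [a, b]) = tau a + tau b"
  using rep_cyc_pair[of a b] by (auto simp: cidx_def)

lemma omega_cyc_singleton: "omega (cyc [a]) Q = wt Q a"
  by (simp add: omega_def rep_cyc_singleton)

lemma omega_cyc_pair: "omega (cyc [a, b]) Q = wt Q a * wt Q b"
  using rep_cyc_pair[of a b] by (auto simp: omega_def)

lemma length_concat_replicate: "length (concat (replicate r xs)) = r * length xs"
  by (induct r) auto

lemma prime_list_singleton: "prime_list [a]"
  unfolding prime_list_def
proof clarify
  fix p r assume "2 \<le> r" and split: "[a] = concat (replicate r p)"
  have "r * length p = 1"
    using arg_cong[where f = length, OF split] by (simp add: length_concat_replicate)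
  with \<open>2 \<le> r\<close> show False
    by simp
qed

lemma prime_list_pair_iff: "prime_list [a, b] \<longleftrightarrow> a \<noteq> b"
proof
  assume prime: "prime_list [a, b]"
  show "a \<noteq> b"
  proof
    assume "a = b"
    then have "[a, b] = concat (replicate 2 [a])"
      by (simp add: numeral_2_eq_2)
    with prime show False
      unfolding prime_list_def by blast
  qed
next
  assume "a \<noteq> b"
  show "prime_list [a, b]"
    unfolding prime_list_def
  proof clarify
    fix p r assume "2 \<le> r" and split: "[a, b] = concat (replicate r p)"
    have "r * length p = 2"
      using arg_cong[where f = length, OF split] by (simp add: length_concat_replicate)
    then have "r dvd 2"
      by (metis dvd_triv_left)
    with \<open>2 \<le> r\<close> have "r = 2"
      using dvd_imp_le[of r 2] by simp
    with \<open>r * length p = 2\<close> have "length p = 1"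
      by simp
    then obtain x where "p = [x]"
      by (auto simp: length_Suc_conv)
    with split \<open>r = 2\<close> \<open>a \<noteq> b\<close> show False
      by (simp add: numeral_2_eq_2)
  qed
qed

lemma closed_path_singleton_iff: "closed_path [a] \<longleftrightarrow> tgt a = src a"
  by (simp add: closed_path_def)

lemma closed_path_pair_iff: "closed_path [a, b] \<longleftrightarrow> tgt a = src b \<and> tgt b = src a"
  by (auto simp: closed_path_def less_Suc_eq numeral_2_eq_2)

abbreviation Padd :: "oedge list set set" where
  "Padd \<equiv> Pmod - Porig"

lemma Padd_iff:
  "c \<in> Padd \<longleftrightarrow>
     (\<exists>xs. closed_path xs \<and> c = cyc xs) \<and> prime_list (rep c) \<and> \<not> set (rep c) \<subseteq> orig_edges"
  by (auto simp: Pmod_def Porig_def cycles_def)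

lemma cyc_in_PaddI:
  "closed_path xs \<Longrightarrow> prime_list (rep (cyc xs)) \<Longrightarrow> \<not> set (rep (cyc xs)) \<subseteq> orig_edges
     \<Longrightarrow> cyc xs \<in> Padd"
  unfolding Padd_iff by blast

lemma Padd_clen_1: "{c \<in> Padd. clen c = 1} = {cyc [Lv1], cyc [Lv2]}"
proof
  show "{c \<in> Padd. clen c = 1} \<subseteq> {cyc [Lv1], cyc [Lv2]}"
  proof
    fix c assume "c \<in> {c \<in> Padd. clen c = 1}"
    then have "c \<in> Padd" and "clen c = 1"
      by simp_all
    then obtain xs where c: "c = cyc xs" and new: "\<not> set (rep c) \<subseteq> orig_edges"
      unfolding Padd_iff by blast
    with \<open>clen c = 1\<close> obtain e where ce: "c = cyc [e]"
      by (auto simp: clen_cyc length_Suc_conv)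
    with new have "e \<notin> orig_edges"
      by (simp add: rep_cyc_singleton)
    with ce show "c \<in> {cyc [Lv1], cyc [Lv2]}"
      by (cases e) (auto simp: orig_edges_def)
  qed
  have "cyc [e] \<in> Padd" if "e \<in> {Lv1, Lv2}" for e
    using that by (intro cyc_in_PaddI)
      (auto simp: closed_path_singleton_iff rep_cyc_singleton prime_list_singleton orig_edges_def)
  then show "{cyc [Lv1], cyc [Lv2]} \<subseteq> {c \<in> Padd. clen c = 1}"
    by (simp add: clen_cyc)
qed

lemma Padd_clen_2: "{c \<in> Padd. clen c = 2} = {cyc [Lv1, L1], cyc [Lv1, L1i]}"
proof
  show "{c \<in> Padd. clen c = 2} \<subseteq> {cyc [Lv1, L1], cyc [Lv1, L1i]}"
  proof
    fix c assume "c \<in> {c \<in> Padd. clen c = 2}"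
    then have "c \<in> Padd" and "clen c = 2"
      by simp_all
    then obtain xs where c: "c = cyc xs" and "closed_path xs"
      and prime: "prime_list (rep c)" and new: "\<not> set (rep c) \<subseteq> orig_edges"
      unfolding Padd_iff by blast
    moreover from c \<open>clen c = 2\<close> have "length xs = 2"
      by (simp add: clen_cyc)
    ultimately obtain a b where xs: "xs = [a, b]"
      by (auto simp: length_Suc_conv numeral_2_eq_2)
    have "a \<noteq> b"
      using prime rep_cyc_pair[of a b] unfolding c xs by (auto simp: prime_list_pair_iff)
    moreover have "\<not> {a, b} \<subseteq> orig_edges"
      using new rep_cyc_pair[of a b] unfolding c xs by auto
    moreover have "tgt a = src b \<and> tgt b = src a"
      using \<open>closed_path xs\<close> unfolding xs closed_path_pair_iff .
    ultimately show "c \<in> {cyc [Lv1, L1], cyc [Lv1, L1i]}"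
      unfolding c xs by (cases a; cases b) (simp_all add: cyc_pair orig_edges_def insert_commute)
  qed
  have "cyc [Lv1, b] \<in> Padd" if "b \<in> {L1, L1i}" for b
    using that rep_cyc_pair[of Lv1 b] by (intro cyc_in_PaddI)
      (auto simp: closed_path_pair_iff prime_list_pair_iff orig_edges_def)
  then show "{cyc [Lv1, L1], cyc [Lv1, L1i]} \<subseteq> {c \<in> Padd. clen c = 2}"
    by (simp add: clen_cyc)
qed

lemma cyc_Lv1_neq_Lv2: "cyc [Lv1] \<noteq> cyc [Lv2]"
  by (simp add: cyc_singleton)

lemma cyc_L1_neq_L1i: "cyc [Lv1, L1] \<noteq> cyc [Lv1, L1i]"
proof
  assume eq: "cyc [Lv1, L1] = cyc [Lv1, L1i]"
  have "[Lv1, L1] \<in> cyc [Lv1, L1i]"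
    unfolding eq[symmetric] by (simp add: cyc_pair)
  then show False
    by (simp add: cyc_pair)
qed

lemma index_pair_1_iff:
  "r \<in> {1..1} \<and> c \<in> Padd \<and> r * clen c = 1 \<longleftrightarrow> (r, c) \<in> {(1, cyc [Lv1]), (1, cyc [Lv2])}"
  using Padd_clen_1 by auto

lemma index_pair_2_iff:
  "r \<in> {1..2} \<and> c \<in> Padd \<and> r * clen c = 2 \<longleftrightarrow>
     (r, c) \<in> {(2, cyc [Lv1]), (2, cyc [Lv2]), (1, cyc [Lv1, L1]), (1, cyc [Lv1, L1i])}"
proof -
  have "r \<in> {1..2} \<and> r * clen c = 2 \<longleftrightarrow> (r = 2 \<and> clen c = 1) \<or> (r = 1 \<and> clen c = 2)"
    by (auto simp: le_Suc_eq numeral_2_eq_2)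
  moreover have "c \<in> Padd \<and> clen c = 1 \<longleftrightarrow> c = cyc [Lv1] \<or> c = cyc [Lv2]"
    and "c \<in> Padd \<and> clen c = 2 \<longleftrightarrow> c = cyc [Lv1, L1] \<or> c = cyc [Lv1, L1i]"
    using Padd_clen_1 Padd_clen_2 by blast+
  ultimately show ?thesis
    unfolding insert_iff singleton_iff empty_iff prod.inject by blast
qed

lemma Collect_prod_filter_eq:
  assumes "\<And>r c. P r c \<and> Q r c \<and> T r c \<longleftrightarrow> (r, c) \<in> S"
  shows "{(r, c). P r c \<and> Q r c \<and> T r c \<and> R r c} = {x \<in> S. R (fst x) (snd x)}"
    and "{(r, c). P r c \<and> Q r c \<and> T r c} = S"
  using assms by auto

lemmas index_pairs_1 = Collect_prod_filter_eq[OF index_pair_1_iff]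
lemmas index_pairs_2 = Collect_prod_filter_eq[OF index_pair_2_iff]

lemmas cyc_distinct = cyc_Lv1_neq_Lv2 cyc_Lv1_neq_Lv2[symmetric]
  cyc_L1_neq_L1i cyc_L1_neq_L1i[symmetric]

lemma Inm_1_0: "Inm 1 0 Q = Q V1 + Q V2"
  unfolding Inm_def index_pairs_1(1)
  by (subst sum.inter_filter) (simp_all add: cidx_cyc_singleton cyc_distinct omega_cyc_singleton)

lemma Inm_2_0: "Inm 2 0 Q = (Q V1 ^ 2 + Q V2 ^ 2) / 2"
  unfolding Inm_def index_pairs_2(1)
  by (subst sum.inter_filter)
    (simp_all add: cidx_cyc_singleton cidx_cyc_pair cyc_distinct omega_cyc_singleton
      add_divide_distrib)

lemma Inm_2_1: "Inm 2 1 Q = Q V1"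
  unfolding Inm_def index_pairs_2(1)
  by (subst sum.inter_filter)
    (simp_all add: cidx_cyc_singleton cidx_cyc_pair cyc_distinct omega_cyc_pair)

lemma Inm_2_minus_1: "Inm 2 (-1) Q = Q V1"
  unfolding Inm_def index_pairs_2(1)
  by (subst sum.inter_filter)
    (simp_all add: cidx_cyc_singleton cidx_cyc_pair cyc_distinct omega_cyc_pair)

lemma In_1: "In 1 Q = Q V1 + Q V2"
  unfolding In_def index_pairs_1(2)
  by (simp add: cyc_distinct omega_cyc_singleton)

lemma In_2: "In 2 Q = (Q V1 ^ 2 + Q V2 ^ 2) / 2 + 2 * Q V1"
  unfolding In_def index_pairs_2(2)
  by (simp add: cyc_distinct omega_cyc_singleton omega_cyc_pair add_divide_distrib)

lemma Floquet_invariants_complete: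
  "(Inm 1 0 P = Inm 1 0 Q \<and> Inm 2 0 P = Inm 2 0 Q
      \<and> Inm 2 1 P = Inm 2 1 Q \<and> Inm 2 (-1) P = Inm 2 (-1) Q)
   \<longleftrightarrow> (\<forall>k. spec k P = spec k Q)"
  unfolding Floquet_spec_eq_iff Inm_1_0 Inm_2_0 Inm_2_1 Inm_2_minus_1 vert_fun_eq_iff[of P]
  by auto

lemma periodic_invariant_2_eq_iff:
  fixes p1 p2 q1 q2 :: complex
  assumes "p1 + p2 = q1 + q2"
  shows "(p1^2 + p2^2) / 2 + 2 * p1 = (q1^2 + q2^2) / 2 + 2 * q1
           \<longleftrightarrow> (2 + p1) * p2 = (2 + q1) * q2"
proof -
  have p2: "p2 = q1 + q2 - p1"
    using assms by (simp add: algebra_simps)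
  have "(p1^2 + (q1 + q2 - p1)^2) / 2 + 2 * p1 - ((q1^2 + q2^2) / 2 + 2 * q1)
          = (2 + q1) * q2 - (2 + p1) * (q1 + q2 - p1)"
    by (simp add: power2_eq_square field_simps)
  then show ?thesis
    unfolding p2 by (metis eq_iff_diff_eq_0)
qed

lemma periodic_invariants_complete:
  "(In 1 P = In 1 Q \<and> In 2 P = In 2 Q) \<longleftrightarrow> spec 0 P = spec 0 Q"
  unfolding In_1 In_2 spec_0_eq_iff
  using periodic_invariant_2_eq_iff[of "P V1" "P V2" "Q V1" "Q V2"] by blast

theorem mainTheorem7:
  fixes Q :: "vert \<Rightarrow> complex"
  shows
   "Inm 1 0 Q = Q V1 + Q V2
    \<and> Inm 2 0 Q = (Q V1 ^ 2 + Q V2 ^ 2) / 2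
    \<and> Inm 2 1 Q = Q V1 \<and> Inm 2 (-1) Q = Q V1
    \<and> (\<forall>P :: vert \<Rightarrow> complex.
         (Inm 1 0 P = Inm 1 0 Q \<and> Inm 2 0 P = Inm 2 0 Q
          \<and> Inm 2 1 P = Inm 2 1 Q \<and> Inm 2 (-1) P = Inm 2 (-1) Q)
         \<longleftrightarrow> (\<forall>k::real. spec k P = spec k Q))
    \<and> In 1 Q = Q V1 + Q V2
    \<and> In 2 Q = (Q V1 ^ 2 + Q V2 ^ 2) / 2 + 2 * Q V1
    \<and> (\<forall>P :: vert \<Rightarrow> complex.
         (In 1 P = In 1 Q \<and> In 2 P = In 2 Q) \<longleftrightarrow> spec 0 P = spec 0 Q)
    \<and> (\<forall>P :: vert \<Rightarrow> complex. spec 0 P = spec 0 Q \<longrightarrow>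
         P = pot (Q V1) (Q V2) \<or> P = pot (Q V2 - 2) (Q V1 + 2))
    \<and> (Q = pot 0 0 \<longrightarrow> (\<forall>P :: vert \<Rightarrow> complex. spec 0 P = spec 0 Q \<longrightarrow>
         P = pot 0 0 \<or> P = pot (-2) 2))
    \<and> (Q = pot (-3) (-1) \<longrightarrow> (\<forall>P :: vert \<Rightarrow> complex. spec 0 P = spec 0 Q \<longrightarrow>
         P = pot (-3) (-1)))"
  using Inm_1_0 Inm_2_0 Inm_2_1 Inm_2_minus_1 Floquet_invariants_complete
    In_1 In_2 periodic_invariants_complete
  by (simp add: periodic_spec_eq_iff pot_eta) (simp add: pot_def)

end
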